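(* Under the standing assumptions below, $(V,+)$ has no normal subgroups invariant under $\mathcal{A}=\langle A,A'\rangle$ other than $0$ and $V$.
   Context: Skew left brace $(B,+,\circ)$: groups $(B,+)$, $(B,\circ)$ with $a\circ(b+c)=a\circ b-a+a\circ c$; $\lambda_a(b)=-a+a\circ b$, $\sigma_a(b)=-a+b+a$, $a*b=-a+a\circ b-b$. Ideal: normal subgroup $I$ of $(B,+)$, $\lambda_a(I)\subseteq I$ for all $a$, normal in $(B,\circ)$. $I*J$ = additive subgroup generated by $\{i*j\}$; $B^{(2)}=B*B$, $B^{(3)}=B^{(2)}*B$. Standing assumptions: $B$ is a finite skew left brace and $X\subseteq B$ with $|X|\ge3$ and $\lambda_a(X)=X$, $\sigma_a(X)=X$ for all $a\in B$; $B$ is additively generated by $X$; the ideal $V$ generated by $\{x-y:x,y\in X\}$ is the smallest non-zero ideal of $B$; $B/V$ is a trivial skew left brace with cyclic additive group; the group $\{\sigma_a\lambda_b|_X:a,b\in V\}$ acts transitively on $X$; and $B^{(3)}=0$. Fix $x\in X$. Let $A\in\mathrm{Aut}(V,+)$ be $Av=x+v-x$ and $A'\in\mathrm{Aut}(V,+)$ the restriction of $\lambda_x$ to $V$; $\mathcal{A}=\langle A,A'\rangle\le\mathrm{Aut}(V)$. *)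

theory Defs
  imports "HOL-Algebra.Algebra"
begin

definition addG :: "'a set \<Rightarrow> ('a \<Rightarrow> 'a \<Rightarrow> 'a) \<Rightarrow> 'a monoid" where
  "addG B pl = \<lparr>carrier = B, monoid.mult = pl,
      one = (THE e. e \<in> B \<and> (\<forall>y\<in>B. pl e y = y \<and> pl y e = y))\<rparr>"

definition circG :: "'a set \<Rightarrow> ('a \<Rightarrow> 'a \<Rightarrow> 'a) \<Rightarrow> 'a monoid" where
  "circG B cc = \<lparr>carrier = B, monoid.mult = cc,
      one = (THE e. e \<in> B \<and> (\<forall>y\<in>B. cc e y = y \<and> cc y e = y))\<rparr>"

definition bzero :: "'a set \<Rightarrow> ('a \<Rightarrow> 'a \<Rightarrow> 'a) \<Rightarrow> 'a" where
  "bzero B pl = \<one>\<^bsub>addG B pl\<^esub>"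

definition bneg :: "'a set \<Rightarrow> ('a \<Rightarrow> 'a \<Rightarrow> 'a) \<Rightarrow> 'a \<Rightarrow> 'a" where
  "bneg B pl a = inv\<^bsub>addG B pl\<^esub> a"

definition skew_brace :: "'a set \<Rightarrow> ('a \<Rightarrow> 'a \<Rightarrow> 'a) \<Rightarrow> ('a \<Rightarrow> 'a \<Rightarrow> 'a) \<Rightarrow> bool" where
  "skew_brace B pl cc \<longleftrightarrow> group (addG B pl) \<and> group (circG B cc) \<and>
     (\<forall>a\<in>B. \<forall>b\<in>B. \<forall>c\<in>B.
        cc a (pl b c) = pl (pl (cc a b) (bneg B pl a)) (cc a c))"

definition blam :: "'a set \<Rightarrow> ('a \<Rightarrow> 'a \<Rightarrow> 'a) \<Rightarrow> ('a \<Rightarrow> 'a \<Rightarrow> 'a) \<Rightarrow> 'a \<Rightarrow> 'a \<Rightarrow> 'a" where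
  "blam B pl cc a b = pl (bneg B pl a) (cc a b)"

definition bsig :: "'a set \<Rightarrow> ('a \<Rightarrow> 'a \<Rightarrow> 'a) \<Rightarrow> 'a \<Rightarrow> 'a \<Rightarrow> 'a" where
  "bsig B pl a b = pl (pl (bneg B pl a) b) a"

definition bstar :: "'a set \<Rightarrow> ('a \<Rightarrow> 'a \<Rightarrow> 'a) \<Rightarrow> ('a \<Rightarrow> 'a \<Rightarrow> 'a) \<Rightarrow> 'a \<Rightarrow> 'a \<Rightarrow> 'a" where
  "bstar B pl cc a b = pl (pl (bneg B pl a) (cc a b)) (bneg B pl b)"

definition brace_ideal :: "'a set \<Rightarrow> ('a \<Rightarrow> 'a \<Rightarrow> 'a) \<Rightarrow> ('a \<Rightarrow> 'a \<Rightarrow> 'a) \<Rightarrow> 'a set \<Rightarrow> bool" where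
  "brace_ideal B pl cc I \<longleftrightarrow> I \<lhd> addG B pl \<and>
     (\<forall>a\<in>B. blam B pl cc a ` I \<subseteq> I) \<and> I \<lhd> circG B cc"

definition ideal_gen :: "'a set \<Rightarrow> ('a \<Rightarrow> 'a \<Rightarrow> 'a) \<Rightarrow> ('a \<Rightarrow> 'a \<Rightarrow> 'a) \<Rightarrow> 'a set \<Rightarrow> 'a set" where
  "ideal_gen B pl cc S = \<Inter>{I. brace_ideal B pl cc I \<and> S \<subseteq> I}"

definition brace_prod :: "'a set \<Rightarrow> ('a \<Rightarrow> 'a \<Rightarrow> 'a) \<Rightarrow> ('a \<Rightarrow> 'a \<Rightarrow> 'a) \<Rightarrow> 'a set \<Rightarrow> 'a set \<Rightarrow> 'a set" where
  "brace_prod B pl cc I J =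
     generate (addG B pl) {bstar B pl cc i j | i j. i \<in> I \<and> j \<in> J}"

text \<open>B/I is a trivial skew left brace: (a o b) + I = (a + b) + I.\<close>
definition quotient_trivial :: "'a set \<Rightarrow> ('a \<Rightarrow> 'a \<Rightarrow> 'a) \<Rightarrow> ('a \<Rightarrow> 'a \<Rightarrow> 'a) \<Rightarrow> 'a set \<Rightarrow> bool" where
  "quotient_trivial B pl cc I \<longleftrightarrow>
     (\<forall>a\<in>B. \<forall>b\<in>B. pl (bneg B pl (pl a b)) (cc a b) \<in> I)"

definition quotient_add_cyclic :: "'a set \<Rightarrow> ('a \<Rightarrow> 'a \<Rightarrow> 'a) \<Rightarrow> 'a set \<Rightarrow> bool" where
  "quotient_add_cyclic B pl I \<longleftrightarrow>
     (\<exists>g\<in>carrier (addG B pl Mod I). carrier (addG B pl Mod I) = generate (addG B pl Mod I) {g})"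

end

theory Submission imports Defs begin

text \<open>Under \<open>B\<^sup>(\<^sup>3\<^sup>) = 0\<close> the identity \<open>(a * b) * c = 0\<close> says \<open>\<lambda>\<^bsub>a * b\<^esub> = id\<close>, so every
\<open>a * b\<close> lies in the kernel \<open>K\<close> of \<open>\<lambda>\<close>, which makes \<open>K\<close> a non-zero ideal, so \<open>V \<subseteq> K\<close> by minimality. As \<open>B/V\<close> is trivial, \<open>\<lambda>\<close> is then a homomorphism
on \<open>(B,+)\<close>. Every generator \<open>y \<in> X\<close> has the form \<open>v + x\<close> with \<open>v \<in> V\<close>, so conjugation by \<open>y\<close>
is conjugation by \<open>x\<close> followed by one by \<open>v\<close>, and \<open>\<lambda>\<^sub>y = \<lambda>\<^sub>v \<lambda>\<^sub>x = \<lambda>\<^sub>x\<close>. Hence an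
\<open>\<A>\<close>-invariant normal subgroup \<open>N\<close> of \<open>V\<close> is stable under all additive conjugations and all
\<open>\<lambda>\<^sub>a\<close>; inside \<open>K\<close> the two group structures agree, so \<open>N\<close> is an ideal of \<open>B\<close>, and minimality
of \<open>V\<close> leaves only \<open>N = 0\<close> and \<open>N = V\<close>.\<close>

lemma (in group) generate_image_stable:
  assumes act: "\<And>a b n. a \<in> carrier G \<Longrightarrow> b \<in> carrier G \<Longrightarrow> n \<in> N \<Longrightarrow> \<phi> (a \<otimes> b) n = \<phi> a (\<phi> b n)"
    and unit: "\<And>n. n \<in> N \<Longrightarrow> \<phi> \<one> n = n"
    and S: "S \<subseteq> carrier G"
    and gens: "\<And>s. s \<in> S \<Longrightarrow> \<phi> s ` N = N"
    and c: "c \<in> generate G S"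
  shows "\<phi> c ` N = N"
  using c
proof (induction c rule: generate.induct)
  case one
  show ?case using unit by force
next
  case (incl s)
  then show ?case by (rule gens)
next
  case (inv s)
  have s: "s \<in> carrier G" using inv S by blast
  have "\<phi> (inv s) ` N = (\<lambda>n. \<phi> (inv s) (\<phi> s n)) ` N"
    using gens[OF inv] by (metis image_image)
  also have "\<dots> = \<phi> \<one> ` N"
  proof (rule image_cong)
    fix n assume "n \<in> N"
    then show "\<phi> (inv s) (\<phi> s n) = \<phi> \<one> n" using act[of "inv s" s n] s by simp
  qed simp
  also have "\<dots> = N" using unit by force
  finally show ?case .
next
  case (eng a b)
  have "a \<in> carrier G" "b \<in> carrier G"
    using eng.hyps generate_in_carrier[OF S] by auto
  then have "\<phi> (a \<otimes> b) ` N = \<phi> a ` \<phi> b ` N"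
    by (auto simp: act image_image intro!: image_cong)
  then show ?case using eng.IH by simp
qed

definition lam_kernel :: "'a set \<Rightarrow> ('a \<Rightarrow> 'a \<Rightarrow> 'a) \<Rightarrow> ('a \<Rightarrow> 'a \<Rightarrow> 'a) \<Rightarrow> 'a set" where
  "lam_kernel B pl cc = {a \<in> B. \<forall>b\<in>B. blam B pl cc a b = b}"

locale skew_left_brace =
  fixes B :: "'a set" and pl cc :: "'a \<Rightarrow> 'a \<Rightarrow> 'a"
  assumes brace: "skew_brace B pl cc"
begin

lemma G_carrier[simp]: "carrier (addG B pl) = B" by (simp add: addG_def)
lemma G_mult[simp]: "a \<otimes>\<^bsub>addG B pl\<^esub> b = pl a b" by (simp add: addG_def)
lemma C_carrier[simp]: "carrier (circG B cc) = B" by (simp add: circG_def)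
lemma C_mult[simp]: "a \<otimes>\<^bsub>circG B cc\<^esub> b = cc a b" by (simp add: circG_def)

sublocale G: group "addG B pl" using brace by (simp add: skew_brace_def)
sublocale C: group "circG B cc" using brace by (simp add: skew_brace_def)

abbreviation z where "z \<equiv> bzero B pl"
abbreviation ng where "ng a \<equiv> bneg B pl a"
abbreviation ic where "ic a \<equiv> inv\<^bsub>circG B cc\<^esub> a"
abbreviation lam where "lam a b \<equiv> blam B pl cc a b"
abbreviation aconj where "aconj a b \<equiv> pl (pl a b) (ng a)"
abbreviation K where "K \<equiv> lam_kernel B pl cc"

lemma z_def': "z = \<one>\<^bsub>addG B pl\<^esub>" by (simp add: bzero_def)
lemma ng_def': "ng a = inv\<^bsub>addG B pl\<^esub> a" by (simp add: bneg_def)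

lemma z_in[simp]: "z \<in> B" using G.one_closed by (simp add: z_def')
lemma ng_in[simp]: "a \<in> B \<Longrightarrow> ng a \<in> B" using G.inv_closed by (simp add: ng_def')
lemma pl_in[simp]: "a \<in> B \<Longrightarrow> b \<in> B \<Longrightarrow> pl a b \<in> B" using G.m_closed by simp
lemma cc_in[simp]: "a \<in> B \<Longrightarrow> b \<in> B \<Longrightarrow> cc a b \<in> B" using C.m_closed by simp
lemma ic_in[simp]: "a \<in> B \<Longrightarrow> ic a \<in> B" using C.inv_closed by simp
lemma pl_assoc[simp]: "a \<in> B \<Longrightarrow> b \<in> B \<Longrightarrow> c \<in> B \<Longrightarrow> pl (pl a b) c = pl a (pl b c)"
  using G.m_assoc by simp
lemma cc_assoc: "a \<in> B \<Longrightarrow> b \<in> B \<Longrightarrow> c \<in> B \<Longrightarrow> cc (cc a b) c = cc a (cc b c)"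
  using C.m_assoc by simp
lemma pl_z[simp]: "a \<in> B \<Longrightarrow> pl a z = a" using G.r_one by (simp add: z_def')
lemma z_pl[simp]: "a \<in> B \<Longrightarrow> pl z a = a" using G.l_one by (simp add: z_def')
lemma pl_ng[simp]: "a \<in> B \<Longrightarrow> pl a (ng a) = z" using G.r_inv by (simp add: z_def' ng_def')
lemma ng_pl[simp]: "a \<in> B \<Longrightarrow> pl (ng a) a = z" using G.l_inv by (simp add: z_def' ng_def')
lemma pl_ng_pl[simp]: "a \<in> B \<Longrightarrow> b \<in> B \<Longrightarrow> pl a (pl (ng a) b) = b"
  by (subst pl_assoc[symmetric]) auto
lemma ng_pl_pl[simp]: "a \<in> B \<Longrightarrow> b \<in> B \<Longrightarrow> pl (ng a) (pl a b) = b"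
  by (subst pl_assoc[symmetric]) auto
lemma ng_ng[simp]: "a \<in> B \<Longrightarrow> ng (ng a) = a" using G.inv_inv by (simp add: ng_def')
lemma ng_plus: "a \<in> B \<Longrightarrow> b \<in> B \<Longrightarrow> ng (pl a b) = pl (ng b) (ng a)"
  using G.inv_mult_group by (simp add: ng_def')
lemma ng_z[simp]: "ng z = z" using G.inv_one by (simp add: z_def' ng_def')
lemma pl_left_cancel[simp]: "a \<in> B \<Longrightarrow> b \<in> B \<Longrightarrow> c \<in> B \<Longrightarrow> pl a b = pl a c \<longleftrightarrow> b = c"
  using G.Units_l_cancel[of a b c] by simp
lemma ng_unique: "a \<in> B \<Longrightarrow> b \<in> B \<Longrightarrow> pl a b = z \<Longrightarrow> ng a = b"
  using G.inv_equality G.inv_comm by (simp add: z_def' ng_def')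

lemma cc_pl_distrib:
  "a \<in> B \<Longrightarrow> b \<in> B \<Longrightarrow> c \<in> B \<Longrightarrow> cc a (pl b c) = pl (pl (cc a b) (ng a)) (cc a c)"
  using brace by (simp add: skew_brace_def)

lemma lam_in[simp]: "a \<in> B \<Longrightarrow> b \<in> B \<Longrightarrow> lam a b \<in> B" by (simp add: blam_def)
lemma cc_eq_pl_lam: "a \<in> B \<Longrightarrow> b \<in> B \<Longrightarrow> cc a b = pl a (lam a b)" by (simp add: blam_def)
lemma lam_plus: "a \<in> B \<Longrightarrow> b \<in> B \<Longrightarrow> c \<in> B \<Longrightarrow> lam a (pl b c) = pl (lam a b) (lam a c)"
  by (simp add: blam_def cc_pl_distrib)

lemma cc_z[simp]: "a \<in> B \<Longrightarrow> cc a z = a"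
proof -
  assume a: "a \<in> B"
  have "pl (cc a z) z = pl (cc a z) (pl (ng a) (cc a z))"
    using cc_pl_distrib[OF a z_in z_in] a by simp
  then have "z = pl (ng a) (cc a z)" using a pl_left_cancel[of "cc a z" z "pl (ng a) (cc a z)"] by simp
  then show ?thesis using a pl_ng_pl[of a "cc a z"] by simp
qed

lemma C_one: "\<one>\<^bsub>circG B cc\<^esub> = z"
  using cc_z[of "\<one>\<^bsub>circG B cc\<^esub>"] C.l_one[of z] C.one_closed by simp

lemma z_cc[simp]: "a \<in> B \<Longrightarrow> cc z a = a" using C.l_one C_one by simp
lemma cc_ic[simp]: "a \<in> B \<Longrightarrow> cc a (ic a) = z" using C.r_inv C_one by simp
lemma ic_cc[simp]: "a \<in> B \<Longrightarrow> cc (ic a) a = z" using C.l_inv C_one by simp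
lemma lam_z[simp]: "b \<in> B \<Longrightarrow> lam z b = b" by (simp add: blam_def)

lemma lam_cc: "a \<in> B \<Longrightarrow> b \<in> B \<Longrightarrow> c \<in> B \<Longrightarrow> lam (cc a b) c = lam a (lam b c)"
proof -
  assume a: "a \<in> B" and b: "b \<in> B" and c: "c \<in> B"
  have "pl (cc a b) (lam (cc a b) c) = cc (cc a b) c" using a b c by (simp add: cc_eq_pl_lam[of "cc a b" c])
  also have "\<dots> = cc a (pl b (lam b c))" using a b c by (simp add: cc_assoc cc_eq_pl_lam[of b c])
  also have "\<dots> = pl (cc a b) (lam a (lam b c))" using a b c by (simp add: lam_plus cc_eq_pl_lam)
  finally show ?thesis using a b c by simp
qed

lemma lam_ic_lam[simp]: "a \<in> B \<Longrightarrow> c \<in> B \<Longrightarrow> lam (ic a) (lam a c) = c"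
  using lam_cc[of "ic a" a c] by simp
lemma lam_lam_ic[simp]: "a \<in> B \<Longrightarrow> c \<in> B \<Longrightarrow> lam a (lam (ic a) c) = c"
  using lam_cc[of a "ic a" c] by simp

lemma lam_kernelI: "a \<in> B \<Longrightarrow> (\<And>b. b \<in> B \<Longrightarrow> lam a b = b) \<Longrightarrow> a \<in> K"
  unfolding lam_kernel_def by blast
lemma lam_kernel_subset: "K \<subseteq> B" unfolding lam_kernel_def by blast
lemma lam_kernel_in[simp]: "k \<in> K \<Longrightarrow> k \<in> B" unfolding lam_kernel_def by blast
lemma lam_kernel_lam[simp]: "k \<in> K \<Longrightarrow> b \<in> B \<Longrightarrow> lam k b = b" unfolding lam_kernel_def by blast

lemma cc_lam_kernel: "k \<in> K \<Longrightarrow> b \<in> B \<Longrightarrow> cc k b = pl k b" by (simp add: cc_eq_pl_lam)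

lemma z_lam_kernel: "z \<in> K" by (rule lam_kernelI) auto

lemma pl_lam_kernel: "k \<in> K \<Longrightarrow> l \<in> K \<Longrightarrow> pl k l \<in> K"
  by (intro lam_kernelI) (auto simp flip: cc_lam_kernel simp: lam_cc)

lemma ic_lam_kernel: "k \<in> K \<Longrightarrow> ic k = ng k"
proof -
  assume k: "k \<in> K"
  have "cc (ic k) (cc k (ng k)) = ic k" using k by (simp add: cc_lam_kernel)
  then show ?thesis using k by (simp add: cc_assoc[symmetric])
qed

lemma ng_lam_kernel: "k \<in> K \<Longrightarrow> ng k \<in> K"
  using lam_ic_lam[of k] by (intro lam_kernelI) (auto simp flip: ic_lam_kernel)

lemma cc_conj_lam_kernel: "a \<in> B \<Longrightarrow> k \<in> K \<Longrightarrow> cc (cc a k) (ic a) \<in> K"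
  by (intro lam_kernelI) (auto simp: lam_cc)

lemma cc_conj_eq_aconj: "a \<in> B \<Longrightarrow> k \<in> K \<Longrightarrow> cc (cc a k) (ic a) = aconj a (lam a k)"
proof -
  assume a: "a \<in> B" and k: "k \<in> K"
  have "cc (cc a k) (ic a) = cc a (pl k (ic a))" using a k by (simp add: cc_assoc cc_lam_kernel)
  also have "\<dots> = pl (pl (cc a k) (ng a)) (cc a (ic a))"
    using a k by (simp add: cc_pl_distrib del: pl_assoc)
  also have "\<dots> = aconj a (lam a k)" using a k by (simp add: cc_eq_pl_lam[of a k])
  finally show ?thesis .
qed

text \<open>On \<open>K\<close> the operations \<open>\<circ>\<close> and \<open>+\<close> coincide, so there the two normality conditions of an
ideal reduce to stability under additive conjugation and under \<open>\<lambda>\<close>.\<close>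

lemma brace_ideal_in_lam_kernel:
  assumes sub: "subgroup N (addG B pl)" and NK: "N \<subseteq> K"
    and conj: "\<And>a n. a \<in> B \<Longrightarrow> n \<in> N \<Longrightarrow> aconj a n \<in> N"
    and lam: "\<And>a n. a \<in> B \<Longrightarrow> n \<in> N \<Longrightarrow> lam a n \<in> N"
  shows "brace_ideal B pl cc N"
  unfolding brace_ideal_def
proof (intro conjI ballI)
  show "N \<lhd> addG B pl"
    using sub conj by (intro G.normal_invI) (auto simp flip: ng_def')
  show "lam a ` N \<subseteq> N" if "a \<in> B" for a using lam that by blast
  have N_closed: "pl n m \<in> N" "ng n \<in> N" if "n \<in> N" "m \<in> N" for n m
    using subgroup.m_closed[OF sub] subgroup.m_inv_closed[OF sub] that by (auto simp: ng_def')
  have "subgroup N (circG B cc)"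
  proof (rule C.subgroupI)
    show "N \<subseteq> carrier (circG B cc)" using NK lam_kernel_subset by simp
    show "N \<noteq> {}" using subgroup.one_closed[OF sub] by blast
  qed (use NK N_closed in \<open>auto simp: cc_lam_kernel ic_lam_kernel subset_iff\<close>)
  then show "N \<lhd> circG B cc"
  proof (rule C.normal_invI)
    fix a n assume a: "a \<in> carrier (circG B cc)" and n: "n \<in> N"
    then have "cc (cc a n) (ic a) = aconj a (lam a n)" using NK cc_conj_eq_aconj by auto
    then show "a \<otimes>\<^bsub>circG B cc\<^esub> n \<otimes>\<^bsub>circG B cc\<^esub> ic a \<in> N"
      using a n conj lam by (simp del: pl_assoc)
  qed
qed

lemma aconj_image_normal_subgroup:
  assumes subV: "subgroup V (addG B pl)" and N: "N \<lhd> (addG B pl)\<lparr>carrier := V\<rparr>"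
    and v: "v \<in> V"
  shows "aconj v ` N = N"
proof -
  interpret V: group "(addG B pl)\<lparr>carrier := V\<rparr>" using G.subgroup_imp_group[OF subV] .
  have conj_V: "aconj u n \<in> N" if "u \<in> V" "n \<in> N" for u n
    using V.normal_invE(2)[OF N] that G.m_inv_consistent[OF subV] by (simp add: ng_def')
  have nv: "ng v \<in> V" using subgroup.m_inv_closed[OF subV v] by (simp add: ng_def')
  have VB: "V \<subseteq> B" using subV subgroup.subset by fastforce
  have NV: "N \<subseteq> V" using N normal_imp_subgroup subgroup.subset by fastforce
  show ?thesis
  proof
    show "aconj v ` N \<subseteq> N" using conj_V v by blast
    show "N \<subseteq> aconj v ` N"
    proof
      fix n assume n: "n \<in> N"
      have "n \<in> B" "v \<in> B" using n v NV VB by auto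
      then have "n = aconj v (aconj (ng v) n)" by simp
      then show "n \<in> aconj v ` N" using conj_V nv n by blast
    qed
  qed
qed

lemma aconj_pl: "a \<in> B \<Longrightarrow> b \<in> B \<Longrightarrow> n \<in> B \<Longrightarrow> aconj (pl a b) n = aconj a (aconj b n)"
  by (simp add: ng_plus)

lemma aconj_image_pl_normal_subgroup:
  assumes subV: "subgroup V (addG B pl)" and N: "N \<lhd> (addG B pl)\<lparr>carrier := V\<rparr>"
    and v: "v \<in> V" and x: "x \<in> B" and conj_x: "aconj x ` N = N"
  shows "aconj (pl v x) ` N = N"
proof -
  have VB: "V \<subseteq> B" using subV subgroup.subset by fastforce
  have NB: "N \<subseteq> B" using N normal_imp_subgroup subgroup.subset VB by fastforce
  have "aconj (pl v x) ` N = aconj v ` aconj x ` N"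
    using v x VB NB by (auto simp del: pl_assoc simp: aconj_pl image_image subset_iff intro!: image_cong)
  then show ?thesis using conj_x aconj_image_normal_subgroup[OF subV N v] by simp
qed

end

locale right_nilpotent_skew_brace = skew_left_brace +
  assumes B3: "brace_prod B pl cc (brace_prod B pl cc B B) B = {bzero B pl}"
begin

lemma bstar_lam_kernel: "a \<in> B \<Longrightarrow> b \<in> B \<Longrightarrow> bstar B pl cc a b \<in> K"
proof -
  assume a: "a \<in> B" and b: "b \<in> B"
  let ?u = "bstar B pl cc a b"
  have u: "?u \<in> brace_prod B pl cc B B"
    unfolding brace_prod_def by (rule generate.incl) (use a b in blast)
  have uB: "?u \<in> B" using a b by (simp add: bstar_def)
  have "lam ?u c = c" if c: "c \<in> B" for c
  proof -
    have "bstar B pl cc ?u c \<in> brace_prod B pl cc (brace_prod B pl cc B B) B"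
      unfolding brace_prod_def[of _ _ _ "brace_prod B pl cc B B"]
      by (rule generate.incl) (use u c in blast)
    then have "pl (lam ?u c) (ng c) = z" using B3 by (simp add: bstar_def blam_def)
    then show ?thesis using c uB by (metis lam_in ng_in ng_ng ng_unique)
  qed
  then show ?thesis using uB by (intro lam_kernelI) auto
qed

lemma lam_eq_bstar_pl: "a \<in> B \<Longrightarrow> b \<in> B \<Longrightarrow> lam a b = pl (bstar B pl cc a b) b"
  by (simp add: bstar_def blam_def)

lemma lam_lam_kernel: "a \<in> B \<Longrightarrow> k \<in> K \<Longrightarrow> lam a k \<in> K"
  using lam_eq_bstar_pl[of a k] bstar_lam_kernel[of a k] pl_lam_kernel by simp

lemma lam_pl_lam_kernel: "c \<in> B \<Longrightarrow> k \<in> K \<Longrightarrow> b \<in> B \<Longrightarrow> lam (pl c k) b = lam c b"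
proof -
  assume c: "c \<in> B" and k: "k \<in> K" and b: "b \<in> B"
  have "pl c k = cc c (lam (ic c) k)" using c k by (simp add: cc_eq_pl_lam)
  moreover have "lam (ic c) k \<in> K" using lam_lam_kernel c k by simp
  ultimately show ?thesis using c b by (simp add: lam_cc)
qed

lemma aconj_lam_kernel: "c \<in> B \<Longrightarrow> k \<in> K \<Longrightarrow> aconj c k \<in> K"
  using cc_conj_lam_kernel[of c "lam (ic c) k"] cc_conj_eq_aconj[of c "lam (ic c) k"]
  by (simp add: lam_lam_kernel)

lemma lam_kernel_ideal: "brace_ideal B pl cc K"
proof (rule brace_ideal_in_lam_kernel)
  show "subgroup K (addG B pl)"
    using z_lam_kernel by (intro G.subgroupI)
      (auto simp: lam_kernel_subset pl_lam_kernel ng_lam_kernel simp flip: ng_def')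
qed (simp_all add: aconj_lam_kernel lam_lam_kernel del: pl_assoc)

lemma lam_kernel_nontrivial:
  assumes "B \<noteq> {z}" shows "K \<noteq> {z}"
proof
  assume Kz: "K = {z}"
  have "a \<in> K" if a: "a \<in> B" for a
    using Kz bstar_lam_kernel[OF a] lam_eq_bstar_pl[OF a] by (intro lam_kernelI[OF a]) auto
  then show False using assms Kz z_in by blast
qed

lemma lam_pl_hom:
  assumes IK: "I \<subseteq> K" and triv: "quotient_trivial B pl cc I"
    and a: "a \<in> B" and b: "b \<in> B" and c: "c \<in> B"
  shows "lam (pl a b) c = lam a (lam b c)"
proof -
  define w where "w = pl (ng (pl a b)) (cc a b)"
  have w: "w \<in> K" using triv IK a b unfolding quotient_trivial_def w_def by blast
  have "lam (pl a b) c = lam (pl (cc a b) (ng w)) c" using a b by (simp add: w_def ng_plus)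
  also have "\<dots> = lam (cc a b) c" using lam_pl_lam_kernel ng_lam_kernel w a b c by simp
  finally show ?thesis using a b c by (simp add: lam_cc)
qed

lemma invariant_normal_subgroup_is_ideal:
  assumes XB: "Xs \<subseteq> B" and genX: "generate (addG B pl) Xs = B" and x: "x \<in> Xs"
    and subV: "subgroup V (addG B pl)" and VK: "V \<subseteq> K"
    and diff: "\<And>y. y \<in> Xs \<Longrightarrow> pl y (ng x) \<in> V"
    and triv: "quotient_trivial B pl cc V"
    and N: "N \<lhd> (addG B pl)\<lparr>carrier := V\<rparr>"
    and conj_x: "aconj x ` N = N" and lam_x: "lam x ` N = N"
  shows "brace_ideal B pl cc N"
proof -
  have subN: "subgroup N (addG B pl)"
    using G.incl_subgroup[OF subV] N normal_def by blast
  have NV: "N \<subseteq> V" using N normal_imp_subgroup subgroup.subset by fastforce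
  have VB: "V \<subseteq> B" using subV subgroup.subset by fastforce
  have xB: "x \<in> B" using x XB by blast
  have NB: "N \<subseteq> B" and NK: "N \<subseteq> K" using NV VB VK by auto
  have split: "y = pl (pl y (ng x)) x" if "y \<in> Xs" for y using that XB xB by auto
  have conj_gen: "aconj y ` N = N" if y: "y \<in> Xs" for y
    using aconj_image_pl_normal_subgroup[OF subV N diff[OF y] xB conj_x] split[OF y] by simp
  have lam_gen: "lam y ` N = N" if y: "y \<in> Xs" for y
  proof -
    have v: "pl y (ng x) \<in> K" using diff[OF y] VK by blast
    have "lam y n = lam x n" if "n \<in> N" for n
    proof -
      have "n \<in> B" using NB that by blast
      then have "lam (pl (pl y (ng x)) x) n = lam x n"
        using lam_pl_hom[OF VK triv] v xB by simp
      then show ?thesis using split[OF y] by simp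
    qed
    then show ?thesis using lam_x by (simp cong: image_cong)
  qed
  have conj_all: "aconj c ` N = N" if "c \<in> B" for c
  proof (rule G.generate_image_stable[where \<phi> = aconj and S = Xs])
    show "c \<in> generate (addG B pl) Xs" using that genX by simp
  qed (use XB NB conj_gen in \<open>auto simp: ng_plus subset_iff simp flip: z_def'\<close>)
  have lam_all: "lam c ` N = N" if "c \<in> B" for c
  proof (rule G.generate_image_stable[where \<phi> = lam and S = Xs])
    show "c \<in> generate (addG B pl) Xs" using that genX by simp
  qed (use XB NB lam_gen lam_pl_hom[OF VK triv] in \<open>auto simp: subset_iff simp flip: z_def'\<close>)
  show ?thesis
    using subN NK conj_all lam_all by (intro brace_ideal_in_lam_kernel) blast+
qed

end

theorem lemma5p4:
  fixes B :: "'a set" and pl cc :: "'a \<Rightarrow> 'a \<Rightarrow> 'a" and Xs :: "'a set" and x :: 'a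
  defines "V \<equiv> ideal_gen B pl cc {pl y (bneg B pl z) | y z. y \<in> Xs \<and> z \<in> Xs}"
  assumes brace: "skew_brace B pl cc"
    and finB: "finite B"
    and XB: "Xs \<subseteq> B"
    and cardX: "card Xs \<ge> 3"
    and lamX: "\<forall>a\<in>B. blam B pl cc a ` Xs = Xs"
    and sigX: "\<forall>a\<in>B. bsig B pl a ` Xs = Xs"
    and genX: "generate (addG B pl) Xs = B"
    and Vnz: "V \<noteq> {bzero B pl}"
    and Vmin: "\<forall>I. brace_ideal B pl cc I \<and> I \<noteq> {bzero B pl} \<longrightarrow> V \<subseteq> I"
    and triv: "quotient_trivial B pl cc V"
    and cyc: "quotient_add_cyclic B pl V"
    and trans: "\<forall>y\<in>Xs. \<forall>z\<in>Xs. \<exists>a\<in>V. \<exists>b\<in>V. bsig B pl a (blam B pl cc b y) = z"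
    and B3: "brace_prod B pl cc (brace_prod B pl cc B B) B = {bzero B pl}"
    and xXs: "x \<in> Xs"
  shows "\<forall>N. normal N ((addG B pl)\<lparr>carrier := V\<rparr>)
            \<and> (\<lambda>v. pl (pl x v) (bneg B pl x)) ` N = N
            \<and> blam B pl cc x ` N = N
          \<longrightarrow> N = {bzero B pl} \<or> N = V"
proof (intro allI impI, elim conjE)
  interpret right_nilpotent_skew_brace B pl cc
    using brace B3 by (simp add: right_nilpotent_skew_brace_def
      right_nilpotent_skew_brace_axioms_def skew_left_brace_def)
  fix N assume N: "N \<lhd> (addG B pl)\<lparr>carrier := V\<rparr>"
    and conj_x: "aconj x ` N = N" and lam_x: "lam x ` N = N"
  have diff_V: "pl y (ng y') \<in> V" if "y \<in> Xs" "y' \<in> Xs" for y y'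
    using that unfolding V_def ideal_gen_def by blast
  have "brace_ideal B pl cc B"
    unfolding brace_ideal_def using G.normal_self C.normal_self by auto
  moreover have "{pl y (ng y') | y y'. y \<in> Xs \<and> y' \<in> Xs} \<subseteq> B"
    using XB by (blast intro: pl_in ng_in)
  ultimately have VB: "V \<subseteq> B" unfolding V_def ideal_gen_def by blast
  have "z \<in> V" using diff_V[OF xXs xXs] XB xXs by auto
  then have "K \<noteq> {z}" using lam_kernel_nontrivial VB Vnz by blast
  then have VK: "V \<subseteq> K" using Vmin lam_kernel_ideal by blast
  have "subgroup V (addG B pl)"
    using G.group_incl_imp_subgroup VB N by (simp add: normal_def)
  then have "brace_ideal B pl cc N"
    by (rule invariant_normal_subgroup_is_ideal[OF XB genX xXs _ VK diff_V[OF _ xXs] triv N conj_x lam_x])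
  moreover have "N \<subseteq> V" using N normal_imp_subgroup subgroup.subset by fastforce
  ultimately show "N = {bzero B pl} \<or> N = V" using Vmin by blast
qed

end
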